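(* In the setting below, for any integer $k$ with $-g(K)\le k\le g(K)$ and any nonzero $a\in B'_k$, there is no element $b\in\widehat{CFD}(X_K^{[n]})$ with $D_1\circ D_2(b)=D_{123}(a)$ or with $D_1\circ D_{12}(b)=D_{123}(a)$.
   Context: Over $\mathbb F=\mathbb Z/2$. Let $K$ be a nontrivial knot of genus $g(K)$ in an $L$-space integral homology sphere, $C^-=CFK^-(K)$, a free $\mathbb F[U]$-complex with Alexander filtration $\cdots\subset\mathcal F_i\subset\mathcal F_{i+1}\subset\cdots$, $A(x)=\min\{i: x\in\mathcal F_i\}$, $U$ lowering $A$ by one, assumed reduced. A filtered basis is an $\mathbb F[U]$-basis whose images in the associated graded module form a basis. A vertically simplified basis is a filtered basis $\{\tilde\xi_0,\dots,\tilde\xi_{2m}\}$ with $A(\tilde\xi_{2j-1})-A(\tilde\xi_{2j})=h_j>0$, $\partial\tilde\xi_{2j-1}\equiv\tilde\xi_{2j}\pmod{UC^-}$ ($1\le j\le m$) and $\partial\tilde\xi_{2i}\equiv0\pmod{UC^-}$. A horizontally simplified basis is a filtered basis $\{\tilde\eta_0,\dots,\tilde\eta_{2m}\}$ with $A(\tilde\eta_{2j})-A(\tilde\eta_{2j-1})=\ell_j>0$, $\partial\tilde\eta_{2j-1}\equiv U^{\ell_j}\tilde\eta_{2j}\pmod{\mathcal F_{A(\tilde\eta_{2j-1})-1}}$, and $A(\partial\tilde\eta_{2i})<A(\tilde\eta_{2i})$. Fix such bases with the property that each $\tilde\xi_p$ is an $\mathbb F[U]$-combination of those $\tilde\eta_q$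 with $A(a_{p,q}\tilde\eta_q)=A(\tilde\xi_p)$, and vice versa. Let $N=\widehat{CFD}(X_K^{[n]})$ (any integer framing $n$), given by the following model: $\iota_0N$ has bases $\{\xi_p\}$ and $\{\eta_p\}$ related by the change-of-basis coefficients of $\{\tilde\xi_p\},\{\tilde\eta_p\}$ evaluated at $U=0$; each element of $\iota_0N$ inherits the Alexander grading of the corresponding element of $C^-$; $\iota_1N$ has basis $\{\kappa^j_1,\dots,\kappa^j_{h_j}\}_j\cup\{\lambda^j_1,\dots,\lambda^j_{\ell_j}\}_j$ together with generators of an "unstable chain". Coefficient maps: vertical chains $\xi_{2j-1}\xrightarrow{D_1}\kappa^j_1\xleftarrow{D_{23}}\kappa^j_2\xleftarrow{D_{23}}\cdots\xleftarrow{D_{23}}\kappa^j_{h_j}\xleftarrow{D_{123}}\xi_{2j}$; horizontal chains $\eta_{2j-1}\xrightarrow{D_3}\lambda^j_1\xrightarrow{D_{23}}\cdots\xrightarrow{D_{23}}\lambda^j_{\ell_j}\xrightarrow{D_2}\eta_{2j}$; and an unstable chain connecting $\xi_0$ to $\eta_0$ depending on $t=n-2\tau(K)$ (where $\tau(K)=A(\tilde\xi_0)$): for $t>0$, $\xi_0\xrightarrow{D_1}\mu_1\xleftarrow{D_{23}}\cdots\xleftarrow{D_{23}}\mu_t\xleftarrow{D_3}\eta_0$; for $t=0$, $\xi_0\xrightarrow{D_1}\nu_1\xleftarrow{D_\emptyset}\nu_2\xrightarrow{D_2}\eta_0$ (for an $L$-space knot, instead $\xi_0\xrightarrow{D_{12}}\eta_0$);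 for $t<0$, $\xi_0\xrightarrow{D_{12}}\nu_1\xleftarrow{D_\emptyset}\nu_2\xrightarrow{D_3}\mu_1\xrightarrow{D_{23}}\cdots\xrightarrow{D_{23}}\mu_{|t|}\xrightarrow{D_2}\eta_0$ (for an $L$-space knot, instead $\xi_0\xrightarrow{D_{123}}\mu_1\xrightarrow{D_{23}}\cdots\xrightarrow{D_{23}}\mu_{|t|}\xrightarrow{D_2}\eta_0$). Here an arrow $x\xrightarrow{D_I}y$ means $y$ appears in $D_I(x)$, the $D_I$ being extended linearly. $B_k\subset\iota_0N$ is the span of elements of Alexander grading $k$, and $B'_k=B_k\cap\operatorname{span}\{\xi_2,\xi_4,\dots,\xi_{2m}\}\cap\operatorname{span}\{\eta_1,\eta_3,\dots,\eta_{2m-1}\}$. *)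

theory Defs
  imports "HOL-Library.Z2" "HOL-Library.Function_Algebras" "HOL-Computational_Algebra.Polynomial"
begin

section \<open>The filtered complex C^- = CFK^-(K) over F[U], F = Z/2\<close>

text \<open>C^- is modelled as the free F[U]-module F[U]^r (r = rank), elements being coordinate
  vectors (nat => bit poly) supported on indices < r.  The Alexander filtration is given by
  integer gradings gr of the standard generators: U^s e_p lies in filtration level gr p - s.
  (Every free filtered F[U]-complex admitting a filtered basis is of this form.)\<close>

type_synonym cvec = "nat \<Rightarrow> bit poly"

definition Cmod :: "nat \<Rightarrow> cvec set" where
  "Cmod r = {v. \<forall>p\<ge>r. v p = 0}"

definition psmul :: "bit poly \<Rightarrow> cvec \<Rightarrow> cvec" where
  "psmul f v = (\<lambda>p. f * v p)"

definition Uop :: "cvec \<Rightarrow> cvec" where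
  "Uop v = psmul [:0, 1:] v"

definition UC :: "nat \<Rightarrow> cvec set" where
  "UC r = Uop ` Cmod r"

definition Filt :: "nat \<Rightarrow> (nat \<Rightarrow> int) \<Rightarrow> int \<Rightarrow> cvec set" where
  "Filt r gr i = {v \<in> Cmod r. \<forall>p<r. \<forall>s. poly.coeff (v p) s \<noteq> 0 \<longrightarrow> gr p - int s \<le> i}"

text \<open>A(x) = min {i. x in F_i}  (used only for nonzero x)\<close>
definition Alex :: "nat \<Rightarrow> (nat \<Rightarrow> int) \<Rightarrow> cvec \<Rightarrow> int" where
  "Alex r gr v = (LEAST i. v \<in> Filt r gr i)"

definition dmap :: "nat \<Rightarrow> (nat \<Rightarrow> nat \<Rightarrow> bit poly) \<Rightarrow> cvec \<Rightarrow> cvec" where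
  "dmap r M v = (\<lambda>q. if q < r then (\<Sum>p<r. v p * M p q) else 0)"

definition filtered_complex :: "nat \<Rightarrow> (nat \<Rightarrow> int) \<Rightarrow> (nat \<Rightarrow> nat \<Rightarrow> bit poly) \<Rightarrow> bool" where
  "filtered_complex r gr M \<longleftrightarrow>
     (\<forall>v\<in>Cmod r. dmap r M (dmap r M v) = 0) \<and>
     (\<forall>i. \<forall>v\<in>Filt r gr i. dmap r M v \<in> Filt r gr i)"

definition reduced :: "nat \<Rightarrow> (nat \<Rightarrow> int) \<Rightarrow> (nat \<Rightarrow> nat \<Rightarrow> bit poly) \<Rightarrow> bool" where
  "reduced r gr M \<longleftrightarrow>
     (\<forall>i. \<forall>v\<in>Filt r gr i. \<exists>w\<in>Cmod r. \<exists>u\<in>Filt r gr (i - 1). dmap r M v = Uop w + u)"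

definition lincomb :: "nat \<Rightarrow> (nat \<Rightarrow> bit poly) \<Rightarrow> (nat \<Rightarrow> cvec) \<Rightarrow> cvec" where
  "lincomb r c y = (\<Sum>q<r. psmul (c q) (y q))"

definition FUbasis :: "nat \<Rightarrow> (nat \<Rightarrow> cvec) \<Rightarrow> bool" where
  "FUbasis r y \<longleftrightarrow> (\<forall>q<r. y q \<in> Cmod r) \<and>
     (\<forall>v\<in>Cmod r. \<exists>!c. (\<forall>q\<ge>r. c q = 0) \<and> v = lincomb r c y)"

text \<open>the F-basis candidates U^s [y_q] of the graded piece F_i / F_(i-1)\<close>
definition grpiece :: "nat \<Rightarrow> (nat \<Rightarrow> int) \<Rightarrow> (nat \<Rightarrow> cvec) \<Rightarrow> int \<Rightarrow> (nat \<times> nat) set" where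
  "grpiece r gr y i = {(q, s). q < r \<and> Alex r gr (y q) - int s = i}"

definition grsum :: "(nat \<Rightarrow> cvec) \<Rightarrow> (nat \<times> nat) set \<Rightarrow> cvec" where
  "grsum y T = (\<Sum>(q, s)\<in>T. psmul (monom 1 s) (y q))"

text \<open>filtered basis: an F[U]-basis whose images in the associated graded module
  (graded F[U]-module, U of degree -1) form a basis, i.e. in each graded piece F_i/F_(i-1)
  the classes U^s [y_q] with A(y_q) - s = i form an F-basis\<close>
definition filtered_basis :: "nat \<Rightarrow> (nat \<Rightarrow> int) \<Rightarrow> (nat \<Rightarrow> cvec) \<Rightarrow> bool" where
  "filtered_basis r gr y \<longleftrightarrow> FUbasis r y \<and>
     (\<forall>i. (\<forall>v\<in>Filt r gr i. \<exists>T. T \<subseteq> grpiece r gr y i \<and> finite T \<and>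
                                   v - grsum y T \<in> Filt r gr (i - 1)) \<and>
          (\<forall>T. T \<subseteq> grpiece r gr y i \<and> finite T \<and> T \<noteq> {} \<longrightarrow> grsum y T \<notin> Filt r gr (i - 1)))"

definition vert_simplified ::
  "nat \<Rightarrow> (nat \<Rightarrow> int) \<Rightarrow> (nat \<Rightarrow> nat \<Rightarrow> bit poly) \<Rightarrow> nat \<Rightarrow> (nat \<Rightarrow> cvec) \<Rightarrow> bool" where
  "vert_simplified r gr M m xi \<longleftrightarrow> r = 2 * m + 1 \<and> filtered_basis r gr xi \<and>
     (\<forall>j\<in>{1..m}. Alex r gr (xi (2*j - 1)) - Alex r gr (xi (2*j)) > 0 \<and>
                 dmap r M (xi (2*j - 1)) - xi (2*j) \<in> UC r) \<and>
     (\<forall>i\<le>m. dmap r M (xi (2*i)) \<in> UC r)"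

definition hV :: "nat \<Rightarrow> (nat \<Rightarrow> int) \<Rightarrow> (nat \<Rightarrow> cvec) \<Rightarrow> nat \<Rightarrow> nat" where
  "hV r gr xi j = nat (Alex r gr (xi (2*j - 1)) - Alex r gr (xi (2*j)))"

definition lH :: "nat \<Rightarrow> (nat \<Rightarrow> int) \<Rightarrow> (nat \<Rightarrow> cvec) \<Rightarrow> nat \<Rightarrow> nat" where
  "lH r gr eta j = nat (Alex r gr (eta (2*j)) - Alex r gr (eta (2*j - 1)))"

definition horiz_simplified ::
  "nat \<Rightarrow> (nat \<Rightarrow> int) \<Rightarrow> (nat \<Rightarrow> nat \<Rightarrow> bit poly) \<Rightarrow> nat \<Rightarrow> (nat \<Rightarrow> cvec) \<Rightarrow> bool" where
  "horiz_simplified r gr M m eta \<longleftrightarrow> r = 2 * m + 1 \<and> filtered_basis r gr eta \<and>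
     (\<forall>j\<in>{1..m}. Alex r gr (eta (2*j)) - Alex r gr (eta (2*j - 1)) > 0 \<and>
                 dmap r M (eta (2*j - 1)) - psmul (monom 1 (lH r gr eta j)) (eta (2*j))
                   \<in> Filt r gr (Alex r gr (eta (2*j - 1)) - 1)) \<and>
     (\<forall>i\<le>m. dmap r M (eta (2*i)) \<in> Filt r gr (Alex r gr (eta (2*i)) - 1))"

definition bases_compatible ::
  "nat \<Rightarrow> (nat \<Rightarrow> int) \<Rightarrow> (nat \<Rightarrow> cvec) \<Rightarrow> (nat \<Rightarrow> cvec) \<Rightarrow>
   (nat \<Rightarrow> nat \<Rightarrow> bit poly) \<Rightarrow> (nat \<Rightarrow> nat \<Rightarrow> bit poly) \<Rightarrow> bool" where
  "bases_compatible r gr xi eta A B \<longleftrightarrow>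
     (\<forall>p<r. (\<forall>q\<ge>r. A p q = 0) \<and> xi p = lincomb r (A p) eta \<and>
            (\<forall>q<r. A p q \<noteq> 0 \<longrightarrow> Alex r gr (psmul (A p q) (eta q)) = Alex r gr (xi p))) \<and>
     (\<forall>p<r. (\<forall>q\<ge>r. B p q = 0) \<and> eta p = lincomb r (B p) xi \<and>
            (\<forall>q<r. B p q \<noteq> 0 \<longrightarrow> Alex r gr (psmul (B p q) (xi q)) = Alex r gr (eta p)))"

text \<open>genus: top Alexander grading of HFK-hat = gr(C^-/U) (C^- reduced)\<close>
definition knot_genus :: "nat \<Rightarrow> (nat \<Rightarrow> int) \<Rightarrow> (nat \<Rightarrow> cvec) \<Rightarrow> int" where
  "knot_genus r gr xi = Max {Alex r gr (xi p) | p. p < r}"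

definition tau :: "nat \<Rightarrow> (nat \<Rightarrow> int) \<Rightarrow> (nat \<Rightarrow> cvec) \<Rightarrow> int" where
  "tau r gr xi = Alex r gr (xi 0)"

section \<open>The type D structure N = CFD-hat of the framed knot complement\<close>

datatype gen = Xi nat | Ka nat nat | La nat nat | Mu nat | Nu nat

text \<open>elements of N: F-coordinates w.r.t. the generators xi_p (of iota_0 N), kappa^j_i,
  lambda^j_i, mu_i, nu_i (of iota_1 N)\<close>
type_synonym nvec = "gen \<Rightarrow> bit"

definition gens :: "nat \<Rightarrow> (nat \<Rightarrow> nat) \<Rightarrow> (nat \<Rightarrow> nat) \<Rightarrow> int \<Rightarrow> bool \<Rightarrow> gen set" where
  "gens m h l t L =
     {Xi p | p. p \<le> 2*m} \<union>
     {Ka j i | j i. 1 \<le> j \<and> j \<le> m \<and> 1 \<le> i \<and> i \<le> h j} \<union>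
     {La j i | j i. 1 \<le> j \<and> j \<le> m \<and> 1 \<le> i \<and> i \<le> l j} \<union>
     {Mu i | i. 1 \<le> i \<and> int i \<le> \<bar>t\<bar>} \<union>
     {Nu i | i. (i = 1 \<or> i = 2) \<and> t \<le> 0 \<and> \<not> L}"

definition Nmod :: "nat \<Rightarrow> (nat \<Rightarrow> nat) \<Rightarrow> (nat \<Rightarrow> nat) \<Rightarrow> int \<Rightarrow> bool \<Rightarrow> nvec set" where
  "Nmod m h l t L = {v. \<forall>g. g \<notin> gens m h l t L \<longrightarrow> v g = 0}"

definition unitv :: "gen \<Rightarrow> nvec" where
  "unitv g = (\<lambda>x. if x = g then 1 else 0)"

definition iota0 :: "(nat \<Rightarrow> bit) \<Rightarrow> nvec" where
  "iota0 c = (\<lambda>x. case x of Xi p \<Rightarrow> c p | _ \<Rightarrow> 0)"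

definition xiv :: "nat \<Rightarrow> nat \<Rightarrow> bit" where
  "xiv p = (\<lambda>q. if q = p then 1 else 0)"

text \<open>eta_p in xi-coordinates: change-of-basis coefficients evaluated at U = 0\<close>
definition etav :: "nat \<Rightarrow> (nat \<Rightarrow> nat \<Rightarrow> bit poly) \<Rightarrow> nat \<Rightarrow> nat \<Rightarrow> bit" where
  "etav m B p = (\<lambda>q. if q \<le> 2*m then poly (B p q) 0 else 0)"

definition linext :: "gen set \<Rightarrow> (gen \<Rightarrow> nvec) \<Rightarrow> nvec \<Rightarrow> nvec" where
  "linext G f v = (\<Sum>g\<in>G. (\<lambda>x. v g * f g x))"

definition D1gen :: "nat \<Rightarrow> int \<Rightarrow> bool \<Rightarrow> gen \<Rightarrow> nvec" where
  "D1gen m t L g = (case g of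
     Xi p \<Rightarrow> (if odd p \<and> p \<le> 2*m then unitv (Ka ((p + 1) div 2) 1)
              else if p = 0 \<and> t > 0 then unitv (Mu 1)
              else if p = 0 \<and> t = 0 \<and> \<not> L then unitv (Nu 1)
              else 0)
   | _ \<Rightarrow> 0)"

definition D123gen :: "nat \<Rightarrow> (nat \<Rightarrow> nat) \<Rightarrow> int \<Rightarrow> bool \<Rightarrow> gen \<Rightarrow> nvec" where
  "D123gen m h t L g = (case g of
     Xi p \<Rightarrow> (if even p \<and> 2 \<le> p \<and> p \<le> 2*m then unitv (Ka (p div 2) (h (p div 2)))
              else if p = 0 \<and> t < 0 \<and> L then unitv (Mu 1)
              else 0)
   | _ \<Rightarrow> 0)"

definition D12gen :: "nat \<Rightarrow> (nat \<Rightarrow> nat \<Rightarrow> bit poly) \<Rightarrow> int \<Rightarrow> bool \<Rightarrow> gen \<Rightarrow> nvec" where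
  "D12gen m B t L g = (case g of
     Xi p \<Rightarrow> (if p = 0 \<and> t < 0 \<and> \<not> L then unitv (Nu 1)
              else if p = 0 \<and> t = 0 \<and> L then iota0 (etav m B 0)
              else 0)
   | _ \<Rightarrow> 0)"

definition D2gen :: "nat \<Rightarrow> (nat \<Rightarrow> nat) \<Rightarrow> (nat \<Rightarrow> nat \<Rightarrow> bit poly) \<Rightarrow> int \<Rightarrow> bool \<Rightarrow> gen \<Rightarrow> nvec" where
  "D2gen m l B t L g = (case g of
     La j i \<Rightarrow> (if 1 \<le> j \<and> j \<le> m \<and> i = l j then iota0 (etav m B (2*j)) else 0)
   | Nu i \<Rightarrow> (if i = 2 \<and> t = 0 \<and> \<not> L then iota0 (etav m B 0) else 0)
   | Mu i \<Rightarrow> (if t < 0 \<and> int i = - t then iota0 (etav m B 0) else 0)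
   | _ \<Rightarrow> 0)"

definition D1 :: "nat \<Rightarrow> (nat \<Rightarrow> nat) \<Rightarrow> (nat \<Rightarrow> nat) \<Rightarrow> int \<Rightarrow> bool \<Rightarrow> nvec \<Rightarrow> nvec" where
  "D1 m h l t L = linext (gens m h l t L) (D1gen m t L)"

definition D123 :: "nat \<Rightarrow> (nat \<Rightarrow> nat) \<Rightarrow> (nat \<Rightarrow> nat) \<Rightarrow> int \<Rightarrow> bool \<Rightarrow> nvec \<Rightarrow> nvec" where
  "D123 m h l t L = linext (gens m h l t L) (D123gen m h t L)"

definition D12 :: "nat \<Rightarrow> (nat \<Rightarrow> nat) \<Rightarrow> (nat \<Rightarrow> nat) \<Rightarrow> (nat \<Rightarrow> nat \<Rightarrow> bit poly) \<Rightarrow> int \<Rightarrow> bool \<Rightarrow> nvec \<Rightarrow> nvec" where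
  "D12 m h l B t L = linext (gens m h l t L) (D12gen m B t L)"

definition D2 :: "nat \<Rightarrow> (nat \<Rightarrow> nat) \<Rightarrow> (nat \<Rightarrow> nat) \<Rightarrow> (nat \<Rightarrow> nat \<Rightarrow> bit poly) \<Rightarrow> int \<Rightarrow> bool \<Rightarrow> nvec \<Rightarrow> nvec" where
  "D2 m h l B t L = linext (gens m h l t L) (D2gen m l B t L)"

definition F2span :: "(nat \<Rightarrow> bit) set \<Rightarrow> (nat \<Rightarrow> bit) set" where
  "F2span S = {\<Sum>x\<in>T. x | T. T \<subseteq> S \<and> finite T}"

definition Bk :: "nat \<Rightarrow> (nat \<Rightarrow> int) \<Rightarrow> nat \<Rightarrow> (nat \<Rightarrow> cvec) \<Rightarrow> (nat \<Rightarrow> cvec) \<Rightarrow>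
                  (nat \<Rightarrow> nat \<Rightarrow> bit poly) \<Rightarrow> int \<Rightarrow> (nat \<Rightarrow> bit) set" where
  "Bk r gr m xi eta B k = F2span ({xiv p | p. p \<le> 2*m \<and> Alex r gr (xi p) = k} \<union>
                                  {etav m B p | p. p \<le> 2*m \<and> Alex r gr (eta p) = k})"

definition Bprime :: "nat \<Rightarrow> (nat \<Rightarrow> int) \<Rightarrow> nat \<Rightarrow> (nat \<Rightarrow> cvec) \<Rightarrow> (nat \<Rightarrow> cvec) \<Rightarrow>
                  (nat \<Rightarrow> nat \<Rightarrow> bit poly) \<Rightarrow> int \<Rightarrow> (nat \<Rightarrow> bit) set" where
  "Bprime r gr m xi eta B k = Bk r gr m xi eta B k
     \<inter> F2span {xiv (2*j) | j. 1 \<le> j \<and> j \<le> m}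
     \<inter> F2span {etav m B (2*j - 1) | j. 1 \<le> j \<and> j \<le> m}"

end

theory Submission
  imports Defs
begin

text \<open>
  Suppose D1(D2 b) = D123(a) or D1(D12 b) = D123(a).  Reading off the
  kappa-coordinates of both sides (kappa^j_1 is hit by D1 from xi_(2j-1), kappa^j_(h_j) by
  D123 from xi_(2j)) gives: the xi_(2j-1)-coordinate c_(2j-1) of D2 b (resp. D12 b) equals
  a_(2j), and a_(2j) <> 0 forces h_j = 1.  Since D2 and D12 land, on iota_0 N, in the span of
  eta_0, eta_2, ..., eta_2m, we obtain coefficients delta_p with
  sum_p delta_p [eta_(2p) : xi_(2j-1)] = a_(2j).
  Back in C^-, let x = d(sum of the eta_(2p) with delta_p = 1 and A(eta_(2p)) = k+1), a cycle
  in F_k, and let y = sum of the eta_(2p-1) representing a in B'_k.  Modulo U both reduce to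
  sum_j a_(2j) xi_(2j), so x + y = U w with w in F_(k+1).  Comparing leading parts in
  F_k/F_(k-1) with respect to the filtered basis eta: the leading part of a cycle involves no
  odd eta (their differentials have leading terms U^l eta_(2j)), the leading part of U w
  involves only positive U-powers, whereas y is a nonempty sum of U^0 eta_(odd): contradiction.
\<close>

text \<open>Keep arithmetic in bit as field arithmetic rather than boolean xor/and.\<close>
declare add_bit_eq_xor[simp del] mult_bit_eq_and[simp del]

lemma sum_fun_apply: "(\<Sum>g\<in>G. F g) x = (\<Sum>g\<in>G. F g x)"
  by (induct G rule: infinite_finite_induct) auto

lemma bitpoly_uminus: "- (p::bit poly) = p"
  by (rule poly_eqI) simp

lemma cvec_minus: "(v::cvec) - w = v + w"
proof (rule ext)
  fix x
  have "v x - w x = v x + - w x" by (rule diff_conv_add_uminus)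
  then show "(v - w) x = (v + w) x" by (simp add: bitpoly_uminus)
qed

lemma cvec_add_self: "(v::cvec) + v = 0"
  by (metis cvec_minus diff_self)

lemma bitfun_add_self: "(f::nat \<Rightarrow> bit) + f = 0"
proof (rule ext)
  fix x show "(f + f) x = 0 x" by (cases "f x") auto
qed

lemma Uop_monom: "Uop v = psmul (monom 1 1) v"
proof -
  have "[:0, 1:] = (monom 1 1 :: bit poly)"
    by (rule poly_eqI) (simp add: coeff_pCons split: nat.split)
  then show ?thesis unfolding Uop_def by simp
qed

lemma psmul_add: "psmul f (v + w) = psmul f v + psmul f w"
  unfolding psmul_def by (rule ext) (simp add: distrib_left)
lemma psmul_sum: "psmul f (\<Sum>x\<in>X. g x) = (\<Sum>x\<in>X. psmul f (g x))"
  unfolding psmul_def by (rule ext) (simp add: sum_fun_apply sum_distrib_left)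
lemma psmul_psmul: "psmul f (psmul g v) = psmul (f * g) v"
  unfolding psmul_def by (rule ext) (simp add: mult.assoc)
lemma psmul_one: "psmul 1 v = v"
  unfolding psmul_def by simp
lemma monom_mult_monom: "monom (1::bit) s * monom 1 t = monom 1 (s + t)"
  by (simp add: mult_monom)

lemma dmap_add: "dmap r M (v + w) = dmap r M v + dmap r M w"
  unfolding dmap_def by (rule ext) (simp add: distrib_right sum.distrib)
lemma dmap_sum: "dmap r M (\<Sum>x\<in>X. g x) = (\<Sum>x\<in>X. dmap r M (g x))"
  unfolding dmap_def
  by (rule ext) (auto simp add: sum_fun_apply sum_distrib_right intro: sum.swap)
lemma dmap_psmul: "dmap r M (psmul f v) = psmul f (dmap r M v)"
  unfolding dmap_def psmul_def by (rule ext) (simp add: sum_distrib_left mult.assoc)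
lemma dmap_lincomb: "dmap r M (lincomb r c y) = (\<Sum>q<r. psmul (c q) (dmap r M (y q)))"
  unfolding lincomb_def by (simp add: dmap_sum dmap_psmul)

lemma Cmod_add: "v \<in> Cmod r \<Longrightarrow> w \<in> Cmod r \<Longrightarrow> v + w \<in> Cmod r"
  unfolding Cmod_def by simp
lemma Cmod_zero: "0 \<in> Cmod r"
  unfolding Cmod_def by simp
lemma Cmod_sum: "(\<And>x. x \<in> X \<Longrightarrow> g x \<in> Cmod r) \<Longrightarrow> (\<Sum>x\<in>X. g x) \<in> Cmod r"
  by (induct X rule: infinite_finite_induct) (auto simp: Cmod_add Cmod_zero)
lemma Cmod_psmul: "v \<in> Cmod r \<Longrightarrow> psmul f v \<in> Cmod r"
  unfolding Cmod_def psmul_def by simp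
lemma Cmod_dmap: "dmap r M v \<in> Cmod r"
  unfolding Cmod_def dmap_def by simp

section \<open>The Alexander filtration\<close>

lemma FiltD: "v \<in> Filt r gr i \<Longrightarrow> p < r \<Longrightarrow> poly.coeff (v p) s \<noteq> 0 \<Longrightarrow> gr p - int s \<le> i"
  unfolding Filt_def by blast
lemma Filt_zero: "0 \<in> Filt r gr i"
  unfolding Filt_def by (simp add: Cmod_zero)

lemma Filt_add: "v \<in> Filt r gr i \<Longrightarrow> w \<in> Filt r gr i \<Longrightarrow> v + w \<in> Filt r gr i"
proof -
  assume v: "v \<in> Filt r gr i" and w: "w \<in> Filt r gr i"
  { fix p s assume "p < r" "poly.coeff ((v + w) p) s \<noteq> 0"
    then have "poly.coeff (v p) s \<noteq> 0 \<or> poly.coeff (w p) s \<noteq> 0" by auto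
    then have "gr p - int s \<le> i" using v w \<open>p < r\<close> unfolding Filt_def by auto }
  then show ?thesis using v w unfolding Filt_def by (auto simp: Cmod_add)
qed

lemma Filt_sum: "(\<And>x. x \<in> X \<Longrightarrow> g x \<in> Filt r gr i) \<Longrightarrow> (\<Sum>x\<in>X. g x) \<in> Filt r gr i"
  by (induct X rule: infinite_finite_induct) (auto simp: Filt_add Filt_zero)

lemma Filt_add_cancel: "u + v \<in> Filt r gr i \<Longrightarrow> v \<in> Filt r gr i \<Longrightarrow> u \<in> Filt r gr i"
  using Filt_add[of "u + v" r gr i v] by (simp add: add.assoc cvec_add_self)

lemma Filt_monom: "v \<in> Filt r gr i \<Longrightarrow> psmul (monom 1 s) v \<in> Filt r gr (i - int s)"
proof -
  assume v: "v \<in> Filt r gr i"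
  { fix p t assume pt: "p < r" "poly.coeff (psmul (monom 1 s) v p) t \<noteq> 0"
    then have "s \<le> t" "poly.coeff (v p) (t - s) \<noteq> 0"
      unfolding psmul_def by (auto simp: coeff_monom_mult split: if_splits)
    then have "gr p - int (t - s) \<le> i" using FiltD[OF v pt(1)] by blast
    then have "gr p - int t \<le> i - int s" using \<open>s \<le> t\<close> by simp }
  then show ?thesis using v Cmod_psmul unfolding Filt_def by auto
qed

lemma Filt_Uop: "w \<in> Cmod r \<Longrightarrow> Uop w \<in> Filt r gr i \<Longrightarrow> w \<in> Filt r gr (i + 1)"
proof -
  assume w: "w \<in> Cmod r" and U: "Uop w \<in> Filt r gr i"
  { fix p s assume ps: "p < r" "poly.coeff (w p) s \<noteq> 0"
    have "poly.coeff (Uop w p) (Suc s) = poly.coeff (w p) s"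
      unfolding Uop_monom psmul_def by (simp add: coeff_monom_mult)
    then have "gr p - int (Suc s) \<le> i" using FiltD[OF U ps(1)] ps(2) by metis
    then have "gr p - int s \<le> i + 1" by simp }
  then show ?thesis using w unfolding Filt_def by auto
qed

lemma Filt_psmul_iff:
  assumes f: "poly.coeff f 0 \<noteq> 0" and v: "v \<in> Cmod r"
  shows "psmul f v \<in> Filt r gr i \<longleftrightarrow> v \<in> Filt r gr i"
proof
  assume fv: "psmul f v \<in> Filt r gr i"
  { fix p s assume ps: "p < r" "poly.coeff (v p) s \<noteq> 0"
    define s0 where "s0 = (LEAST s. poly.coeff (v p) s \<noteq> 0)"
    have s0: "poly.coeff (v p) s0 \<noteq> 0" "s0 \<le> s"
      using ps(2) unfolding s0_def by (auto intro: LeastI Least_le)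
    have lt: "\<And>t. t < s0 \<Longrightarrow> poly.coeff (v p) t = 0"
      unfolding s0_def using not_less_Least by blast
    have "poly.coeff (f * v p) s0 = (\<Sum>i\<le>s0. poly.coeff f i * poly.coeff (v p) (s0 - i))"
      by (rule coeff_mult)
    also have "\<dots> = (\<Sum>i\<in>{0}. poly.coeff f i * poly.coeff (v p) (s0 - i))"
      by (rule sum.mono_neutral_right) (auto simp: lt)
    finally have "poly.coeff (psmul f v p) s0 \<noteq> 0"
      using f s0(1) unfolding psmul_def by simp
    then have "gr p - int s0 \<le> i" using fv ps unfolding Filt_def by auto
    then have "gr p - int s \<le> i" using s0(2) by simp }
  then show "v \<in> Filt r gr i" using v unfolding Filt_def by auto
next
  assume vi: "v \<in> Filt r gr i"
  { fix p s assume ps: "p < r" "poly.coeff (psmul f v p) s \<noteq> 0"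
    then have "(\<Sum>j\<le>s. poly.coeff f j * poly.coeff (v p) (s - j)) \<noteq> 0"
      unfolding psmul_def by (simp add: coeff_mult)
    then obtain j where j: "j \<le> s" "poly.coeff f j * poly.coeff (v p) (s - j) \<noteq> 0"
      by (meson atMost_iff sum.neutral)
    then have "poly.coeff (v p) (s - j) \<noteq> 0" by auto
    then have "gr p - int (s - j) \<le> i" using vi ps unfolding Filt_def by auto
    then have "gr p - int s \<le> i" using j by simp }
  then show "psmul f v \<in> Filt r gr i" using v Cmod_psmul unfolding Filt_def by auto
qed

lemma Alex_psmul:
  assumes "poly.coeff f 0 \<noteq> 0" "v \<in> Cmod r"
  shows "Alex r gr (psmul f v) = Alex r gr v"
  unfolding Alex_def using Filt_psmul_iff[OF assms] by simp

lemma Alex_in_Filt: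
  assumes v: "v \<in> Cmod r"
  shows "v \<in> Filt r gr (Alex r gr v)"
proof (cases "v = 0")
  case True then show ?thesis using Filt_zero by simp
next
  case False
  define S where "S = {gr p - int s | p s. p < r \<and> poly.coeff (v p) s \<noteq> 0}"
  have Ssub: "S \<subseteq> (\<lambda>(p,s). gr p - int s) ` (SIGMA p:{..<r}. {..degree (v p)})"
  proof
    fix x assume "x \<in> S"
    then obtain p s where ps: "x = gr p - int s" "p < r" "poly.coeff (v p) s \<noteq> 0" unfolding S_def by blast
    then have "s \<le> degree (v p)" by (simp add: le_degree)
    then show "x \<in> (\<lambda>(p,s). gr p - int s) ` (SIGMA p:{..<r}. {..degree (v p)})"
      using ps by (intro image_eqI[of _ _ "(p,s)"]) auto
  qed
  have fin: "finite S" by (rule finite_subset[OF Ssub]) auto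
  obtain p0 where "v p0 \<noteq> 0" using False by (auto simp: fun_eq_iff)
  then have p0: "p0 < r" using v unfolding Cmod_def by (metis (mono_tags, lifting) mem_Collect_eq not_le)
  obtain s0 where "poly.coeff (v p0) s0 \<noteq> 0" using \<open>v p0 \<noteq> 0\<close> by (meson leading_coeff_neq_0)
  then have ne: "S \<noteq> {}" unfolding S_def using p0 by auto
  have iff: "\<And>i. v \<in> Filt r gr i \<longleftrightarrow> Max S \<le> i"
  proof
    fix i assume "v \<in> Filt r gr i"
    then have "\<forall>x\<in>S. x \<le> i" unfolding S_def Filt_def by auto
    then show "Max S \<le> i" using fin ne by simp
  next
    fix i assume "Max S \<le> i"
    then have "\<forall>x\<in>S. x \<le> i" using fin ne by (meson Max_ge order_trans)
    then show "v \<in> Filt r gr i" using v unfolding S_def Filt_def by blast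
  qed
  have "Alex r gr v = Max S"
    unfolding Alex_def iff by (rule Least_equality) auto
  then show ?thesis using iff by simp
qed

section \<open>Reduction modulo U\<close>

text \<open>rho v is the image of v in C^-/U C^- = F^r (constant coefficients).\<close>
definition rho :: "cvec \<Rightarrow> nat \<Rightarrow> bit" where
  "rho v = (\<lambda>p. poly.coeff (v p) 0)"

lemma rho_add: "rho (v + w) = rho v + rho w"
  unfolding rho_def by (rule ext) simp
lemma rho_sum: "rho (\<Sum>x\<in>X. g x) = (\<Sum>x\<in>X. rho (g x))"
  unfolding rho_def by (rule ext) (simp add: sum_fun_apply coeff_sum)
lemma rho_psmul: "rho (psmul f v) = (\<lambda>p. poly.coeff f 0 * rho v p)"
  unfolding rho_def psmul_def by (rule ext) (simp add: coeff_mult_0)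
lemma rho_Uop: "rho (Uop v) = 0"
  unfolding Uop_def rho_psmul by (rule ext) simp

lemma rho_UC: "v \<in> UC r \<Longrightarrow> rho v = 0"
  unfolding UC_def using rho_Uop by auto

lemma rho_diff_UC: "v - w \<in> UC r \<Longrightarrow> rho v = rho w"
proof -
  assume "v - w \<in> UC r"
  then have "rho v + rho w = 0" using rho_UC cvec_minus rho_add by metis
  then have "rho v + rho w + rho w = rho w" by simp
  then show ?thesis by (simp add: add.assoc bitfun_add_self)
qed

lemma rho0_Uop:
  assumes v: "v \<in> Cmod r" and z: "rho v = 0"
  shows "\<exists>w\<in>Cmod r. v = Uop w"
proof -
  have "\<exists>q. v p = pCons 0 q" for p
  proof -
    obtain c q where "v p = pCons c q" by (rule pCons_cases)
    moreover have "c = 0" using z calculation unfolding rho_def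
      by (metis coeff_pCons_0 zero_fun_apply)
    ultimately show ?thesis by auto
  qed
  then obtain w where w: "\<And>p. v p = pCons 0 (w p)" by metis
  have "w \<in> Cmod r" unfolding Cmod_def
  proof (intro CollectI allI impI)
    fix p assume "r \<le> p"
    then have "v p = 0" using v unfolding Cmod_def by auto
    then show "w p = 0" using w[of p] by simp
  qed
  moreover have "v = Uop w"
    unfolding Uop_def psmul_def by (rule ext) (simp add: w)
  ultimately show ?thesis by blast
qed

lemma rho_lincomb: "rho (lincomb r c y) = (\<Sum>q<r. (\<lambda>x. poly.coeff (c q) 0 * rho (y q) x))"
  unfolding lincomb_def by (simp add: rho_sum rho_psmul)

lemma fsum_scal: "(\<Sum>p\<in>X. (\<lambda>x. e p * (g x :: bit))) = (\<lambda>x. (\<Sum>p\<in>X. e p) * g x)"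
  by (rule ext) (simp add: sum_fun_apply sum_distrib_right)

section \<open>Leading parts with respect to a filtered basis\<close>

lemma grsum_alt: "grsum y T = (\<Sum>z\<in>T. psmul (monom 1 (snd z)) (y (fst z)))"
  unfolding grsum_def by (simp add: case_prod_beta)

lemma grsum_union:
  "finite S \<Longrightarrow> finite T \<Longrightarrow> S \<inter> T = {} \<Longrightarrow> grsum y (S \<union> T) = grsum y S + grsum y T"
  unfolding grsum_def by (rule sum.union_disjoint)

lemma grsum_symdiff:
  assumes "finite S" "finite T"
  shows "grsum y S + grsum y T = grsum y ((S - T) \<union> (T - S))"
proof -
  have split: "grsum y X = grsum y (X - Y) + grsum y (S \<inter> T)"
    if "finite X" "X \<inter> Y = S \<inter> T" for X Y
  proof -
    have "X = (X - Y) \<union> (S \<inter> T)" "(X - Y) \<inter> (S \<inter> T) = {}" using that(2) by blast+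
    then show ?thesis using that grsum_union[of "X - Y" "S \<inter> T" y] assms by (metis finite_Diff finite_Int)
  qed
  have S: "grsum y S = grsum y (S - T) + grsum y (S \<inter> T)" by (rule split) (use assms in auto)
  have T: "grsum y T = grsum y (T - S) + grsum y (S \<inter> T)" by (rule split) (use assms in auto)
  have "grsum y ((S - T) \<union> (T - S)) = grsum y (S - T) + grsum y (T - S)"
    using assms by (intro grsum_union) auto
  then show ?thesis unfolding S T
    by (metis (no_types, lifting) add.assoc add.commute add.right_neutral cvec_add_self)
qed

lemma fb_indep: "filtered_basis r gr y \<Longrightarrow> T \<subseteq> grpiece r gr y i \<Longrightarrow> finite T \<Longrightarrow> T \<noteq> {}
   \<Longrightarrow> grsum y T \<notin> Filt r gr (i - 1)"
  unfolding filtered_basis_def by blast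

lemma fb_decomp: "filtered_basis r gr y \<Longrightarrow> v \<in> Filt r gr i \<Longrightarrow>
   \<exists>T. T \<subseteq> grpiece r gr y i \<and> finite T \<and> v + grsum y T \<in> Filt r gr (i - 1)"
  unfolding filtered_basis_def by (metis cvec_minus)

lemma grsum_unique:
  assumes y: "filtered_basis r gr y"
    and S: "S \<subseteq> grpiece r gr y i" "finite S" and T: "T \<subseteq> grpiece r gr y i" "finite T"
    and ST: "grsum y S + grsum y T \<in> Filt r gr (i - 1)"
  shows "S = T"
proof (rule ccontr)
  assume "S \<noteq> T"
  then have "(S - T) \<union> (T - S) \<noteq> {}" by blast
  then have "grsum y ((S - T) \<union> (T - S)) \<notin> Filt r gr (i - 1)"
    using fb_indep[OF y] S T by (meson Diff_subset finite_Diff finite_UnI le_sup_iff order_trans)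
  then show False using ST grsum_symdiff[OF S(2) T(2)] by simp
qed

lemma Uop_leading_part:
  assumes y: "filtered_basis r gr y" and w: "w \<in> Filt r gr (i + 1)"
  obtains T where "T \<subseteq> grpiece r gr y i" "finite T" "\<forall>z\<in>T. snd z \<noteq> 0"
    "Uop w + grsum y T \<in> Filt r gr (i - 1)"
proof -
  obtain T1 where T1: "T1 \<subseteq> grpiece r gr y (i + 1)" "finite T1" "w + grsum y T1 \<in> Filt r gr i"
    using fb_decomp[OF y w] by auto
  define shift where "shift = (\<lambda>z::nat \<times> nat. (fst z, Suc (snd z)))"
  have inj: "inj_on shift T1" unfolding shift_def by (rule inj_onI) (auto simp: prod_eq_iff)
  have "shift ` T1 \<subseteq> grpiece r gr y i" using T1(1) unfolding shift_def grpiece_def by auto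
  moreover have "\<forall>z\<in>shift ` T1. snd z \<noteq> 0" unfolding shift_def by auto
  moreover have "psmul (monom 1 1) (grsum y T1) = grsum y (shift ` T1)"
    unfolding grsum_alt psmul_sum psmul_psmul monom_mult_monom sum.reindex[OF inj]
    by (simp add: shift_def comp_def)
  then have "Uop w + grsum y (shift ` T1) \<in> Filt r gr (i - 1)"
    using Filt_monom[OF T1(3), of 1] by (simp add: psmul_add Uop_monom)
  ultimately show ?thesis using that T1(2) by blast
qed

lemma sum_image_support:
  fixes f :: "nat \<Rightarrow> 'a::comm_monoid_add"
  assumes "finite X" "g ` S \<subseteq> X" "inj_on g S" "\<And>q. q \<in> X \<Longrightarrow> q \<notin> g ` S \<Longrightarrow> f q = 0"
  shows "sum f X = (\<Sum>j\<in>S. f (g j))"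
proof -
  have "sum f X = sum f (g ` S)" using assms by (intro sum.mono_neutral_right) auto
  then show ?thesis using sum.reindex[OF assms(3)] by simp
qed

lemma odd_index: "odd (q::nat) \<Longrightarrow> q < 2*m+1 \<Longrightarrow> (q + 1) div 2 \<in> {1..m} \<and> q = 2 * ((q + 1) div 2) - 1"
  by (elim oddE) auto

lemma sum_odd_support:
  fixes f :: "nat \<Rightarrow> 'a::comm_monoid_add"
  assumes "\<And>i. i \<le> m \<Longrightarrow> f (2*i) = 0"
  shows "(\<Sum>q<2*m+1. f q) = (\<Sum>j\<in>{1..m}. f (2*j-1))"
proof (rule sum_image_support)
  show "inj_on (\<lambda>j. 2*j-1) {1..m}" by (rule inj_onI) auto
  fix q assume q: "q \<in> {..<2*m+1}" "q \<notin> (\<lambda>j. 2*j-1) ` {1..m}"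
  then have "even q" using odd_index[of q m] by force
  then show "f q = 0" using q(1) assms by (auto elim!: evenE)
qed auto

lemma sum_even_support:
  fixes f :: "nat \<Rightarrow> 'a::comm_monoid_add"
  assumes "\<And>q. f q \<noteq> 0 \<Longrightarrow> \<exists>j\<in>{1..m}. q = 2*j"
  shows "(\<Sum>q<2*m+1. f q) = (\<Sum>j\<in>{1..m}. f (2*j))"
  by (rule sum_image_support) (use assms in \<open>auto simp: inj_on_def\<close>)

section \<open>The maps D1, D123, D2, D12 of the type D structure\<close>

lemma finite_gens: "finite (gens m h l t L)"
proof -
  have a: "{Xi p | p. p \<le> 2*m} = Xi ` {..2*m}" by auto
  have b: "{Ka j i | j i. 1 \<le> j \<and> j \<le> m \<and> 1 \<le> i \<and> i \<le> h j}
     = (\<lambda>(j,i). Ka j i) ` (SIGMA j:{1..m}. {1..h j})" by auto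
  have c: "{La j i | j i. 1 \<le> j \<and> j \<le> m \<and> 1 \<le> i \<and> i \<le> l j}
     = (\<lambda>(j,i). La j i) ` (SIGMA j:{1..m}. {1..l j})" by auto
  have d: "{Mu i | i. 1 \<le> i \<and> int i \<le> \<bar>t\<bar>} \<subseteq> Mu ` {..nat \<bar>t\<bar>}" by auto
  have e: "{Nu i | i. (i = 1 \<or> i = 2) \<and> t \<le> 0 \<and> \<not> L} \<subseteq> Nu ` {1,2}" by auto
  show ?thesis unfolding gens_def a b c
    using finite_subset[OF d] finite_subset[OF e] by auto
qed

lemma Xi_in_gens: "p \<le> 2*m \<Longrightarrow> Xi p \<in> gens m h l t L"
  unfolding gens_def by auto

lemma linext_apply: "linext G f v x = (\<Sum>g\<in>G. v g * f g x)"
  unfolding linext_def sum_fun_apply ..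

lemma D1_Ka:
  assumes j: "1 \<le> j" "j \<le> m"
  shows "D1 m h l t L v (Ka j i) = (if i = 1 then v (Xi (2*j-1)) else 0)"
proof -
  have "D1 m h l t L v (Ka j i)
      = (\<Sum>g\<in>gens m h l t L. if g = Xi (2*j-1) then (if i = 1 then v g else 0) else 0)"
    unfolding D1_def linext_apply D1gen_def unitv_def
    by (intro sum.cong refl) (use j in \<open>auto split: gen.split elim!: oddE\<close>)
  then show ?thesis using finite_gens Xi_in_gens[of "2*j-1" m h l t L] j by simp
qed

lemma D123_Ka:
  assumes j: "1 \<le> j" "j \<le> m"
  shows "D123 m h l t L (iota0 a) (Ka j i) = (if i = h j then a (2*j) else 0)"
proof -
  have "D123 m h l t L (iota0 a) (Ka j i)
      = (\<Sum>g\<in>gens m h l t L. if g = Xi (2*j) then (if i = h j then iota0 a g else 0) else 0)"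
    unfolding D123_def linext_apply D123gen_def unitv_def
    by (intro sum.cong refl) (use j in \<open>auto split: gen.split elim!: evenE\<close>)
  then show ?thesis using finite_gens Xi_in_gens[of "2*j" m h l t L] j
    by (simp add: iota0_def)
qed

lemma kappa_equations:
  assumes eq: "D1 m h l t L v = D123 m h l t L (iota0 a)" and j: "1 \<le> j" "j \<le> m"
  shows "v (Xi (2*j-1)) = a (2*j)" and "a (2*j) \<noteq> 0 \<Longrightarrow> h j = 1"
proof -
  have e1: "v (Xi (2*j-1)) = (if h j = 1 then a (2*j) else 0)"
    using fun_cong[OF eq, of "Ka j 1"] by (simp add: D1_Ka[OF j] D123_Ka[OF j] eq_commute)
  have e2: "a (2*j) = (if h j = 1 then v (Xi (2*j-1)) else 0)"
    using fun_cong[OF eq, of "Ka j (h j)"] by (simp add: D1_Ka[OF j] D123_Ka[OF j])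
  show "v (Xi (2*j-1)) = a (2*j)" using e1 e2 by (cases "h j = 1") auto
  show "h j = 1" if "a (2*j) \<noteq> 0" using e2 that by (cases "h j = 1") auto
qed

text \<open>The even eta's in xi-coordinates, and their span: on iota_0 N the maps D2 and D12
  only produce eta_0, eta_2, ..., eta_2m.\<close>
definition even_idx :: "nat \<Rightarrow> nat set" where
  "even_idx m = {p. p \<le> 2*m \<and> even p}"

definition even_eta_span :: "nat \<Rightarrow> (nat \<Rightarrow> nat \<Rightarrow> bit poly) \<Rightarrow> (nat \<Rightarrow> bit) set" where
  "even_eta_span m B = {x. \<exists>\<delta>. \<forall>q. x q = (\<Sum>p\<in>even_idx m. \<delta> p * etav m B p q)}"

lemma finite_even_idx: "finite (even_idx m)"
  unfolding even_idx_def by auto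

lemma even_eta_span_0: "(\<lambda>q. 0) \<in> even_eta_span m B"
  unfolding even_eta_span_def by (intro CollectI exI[of _ "\<lambda>_. 0"]) simp

lemma even_eta_span_etav: "p \<in> even_idx m \<Longrightarrow> etav m B p \<in> even_eta_span m B"
  unfolding even_eta_span_def
proof (intro CollectI exI[of _ "\<lambda>x. if x = p then 1 else 0"] allI)
  fix q assume p: "p \<in> even_idx m"
  have "(\<Sum>p'\<in>even_idx m. (if p' = p then 1 else 0) * etav m B p' q)
      = (\<Sum>p'\<in>even_idx m. if p' = p then etav m B p' q else 0)"
    by (intro sum.cong) auto
  then show "etav m B p q = (\<Sum>p'\<in>even_idx m. (if p' = p then 1 else 0) * etav m B p' q)"
    using p finite_even_idx by simp
qed

lemma even_eta_span_add:
  "x \<in> even_eta_span m B \<Longrightarrow> y \<in> even_eta_span m B \<Longrightarrow> (\<lambda>q. x q + y q) \<in> even_eta_span m B"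
  unfolding even_eta_span_def
  by (fastforce intro: exI[of _ "\<lambda>p. _ p + _ p"] simp: distrib_right sum.distrib)

lemma even_eta_span_smult: "x \<in> even_eta_span m B \<Longrightarrow> (\<lambda>q. c * x q) \<in> even_eta_span m B"
  unfolding even_eta_span_def
  by (fastforce intro: exI[of _ "\<lambda>p. c * _ p"] simp: sum_distrib_left mult.assoc)

lemma even_eta_span_sum:
  "finite G \<Longrightarrow> (\<And>g. g \<in> G \<Longrightarrow> f g \<in> even_eta_span m B)
   \<Longrightarrow> (\<lambda>q. \<Sum>g\<in>G. f g q) \<in> even_eta_span m B"
proof (induct G rule: finite_induct)
  case empty then show ?case using even_eta_span_0 by simp
next
  case (insert x F)
  then show ?case using even_eta_span_add[of "f x" m B "\<lambda>q. \<Sum>g\<in>F. f g q"] by simp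
qed

lemma linext_even_eta_span:
  assumes "\<And>g. (\<lambda>q. Dg g (Xi q)) \<in> even_eta_span m B"
  shows "(\<lambda>q. linext (gens m h l t L) Dg b (Xi q)) \<in> even_eta_span m B"
  unfolding linext_apply
  by (rule even_eta_span_sum[OF finite_gens]) (rule even_eta_span_smult[OF assms])

lemma D2_even_eta_span: "(\<lambda>q. D2 m h l B t L b (Xi q)) \<in> even_eta_span m B"
  unfolding D2_def
proof (rule linext_even_eta_span)
  fix g
  show "(\<lambda>q. D2gen m l B t L g (Xi q)) \<in> even_eta_span m B"
    using even_eta_span_0 even_eta_span_etav[of 0 m] even_eta_span_etav[of "2 * _" m]
    by (cases g) (auto simp: D2gen_def iota0_def even_idx_def)
qed

lemma D12_even_eta_span: "(\<lambda>q. D12 m h l B t L b (Xi q)) \<in> even_eta_span m B"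
  unfolding D12_def
proof (rule linext_even_eta_span)
  fix g
  show "(\<lambda>q. D12gen m B t L g (Xi q)) \<in> even_eta_span m B"
    using even_eta_span_0 even_eta_span_etav[of 0 m B]
    by (cases g) (auto simp: D12gen_def iota0_def even_idx_def unitv_def)
qed

lemma F2span_supp:
  assumes x: "x \<in> F2span S" and S: "\<And>y q. y \<in> S \<Longrightarrow> y q \<noteq> 0 \<Longrightarrow> R q" and xq: "x q \<noteq> 0"
  shows "R q"
proof -
  obtain T where T: "T \<subseteq> S" "finite T" "x = (\<Sum>y\<in>T. y)" using x unfolding F2span_def by blast
  have "(\<Sum>y\<in>T. y q) \<noteq> 0" using xq T(3) by (simp add: sum_fun_apply)
  then obtain y where "y \<in> T" "y q \<noteq> 0" by (meson sum.neutral)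
  then show ?thesis using S T(1) by blast
qed

section \<open>The argument in C^- for a pair of simplified bases\<close>

text \<open>The horizontal arrow: the leading term of d(U^s eta_(2j-1)) is U^(s + l_j) eta_(2j).\<close>
definition harrow :: "nat \<Rightarrow> (nat \<Rightarrow> int) \<Rightarrow> (nat \<Rightarrow> cvec) \<Rightarrow> nat \<times> nat \<Rightarrow> nat \<times> nat" where
  "harrow r gr eta z = (fst z + 1, snd z + lH r gr eta ((fst z + 1) div 2))"

locale simplified_bases =
  fixes m r :: nat and gr :: "nat \<Rightarrow> int" and M :: "nat \<Rightarrow> nat \<Rightarrow> bit poly"
    and xi eta :: "nat \<Rightarrow> cvec" and A B :: "nat \<Rightarrow> nat \<Rightarrow> bit poly"
  assumes r: "r = 2*m+1"
    and cx: "filtered_complex r gr M"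
    and vs: "vert_simplified r gr M m xi"
    and hs: "horiz_simplified r gr M m eta"
    and comp: "bases_compatible r gr xi eta A B"
begin

lemma xi_Cmod: "q < r \<Longrightarrow> xi q \<in> Cmod r"
  using vs unfolding vert_simplified_def filtered_basis_def FUbasis_def by blast

lemma eta_Cmod: "q < r \<Longrightarrow> eta q \<in> Cmod r"
  using hs unfolding horiz_simplified_def filtered_basis_def FUbasis_def by blast

lemma fb_eta: "filtered_basis r gr eta"
  using hs unfolding horiz_simplified_def by blast

lemma etav_coeff: "q < r \<Longrightarrow> etav m B p q = poly.coeff (B p q) 0"
  unfolding etav_def r by (simp add: poly_0_coeff_0)

lemma eta_lincomb: "p < r \<Longrightarrow> eta p = lincomb r (B p) xi"
  using comp unfolding bases_compatible_def by blast

lemma etav_homogeneous: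
  assumes p: "p < r" and q: "q < r" and e: "etav m B p q \<noteq> 0"
  shows "Alex r gr (xi q) = Alex r gr (eta p)"
proof -
  have c: "poly.coeff (B p q) 0 \<noteq> 0" using e etav_coeff[OF q] by simp
  then have "Alex r gr (psmul (B p q) (xi q)) = Alex r gr (eta p)"
    using comp p q unfolding bases_compatible_def by fastforce
  then show ?thesis using Alex_psmul[OF c xi_Cmod[OF q]] by simp
qed

lemma rho_eta: "p < r \<Longrightarrow> rho (eta p) = (\<Sum>q<r. (\<lambda>x. etav m B p q * rho (xi q) x))"
  by (simp add: eta_lincomb rho_lincomb etav_coeff)

text \<open>Modulo U, d xi_(2j-1) = xi_(2j) and d xi_(2i) = 0 (vertical simplification); hence
  d eta_p reduces to the sum of [eta_p : xi_(2j-1)] xi_(2j).\<close>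
lemma rho_dmap_eta:
  assumes p: "p < r"
  shows "rho (dmap r M (eta p)) = (\<Sum>j\<in>{1..m}. (\<lambda>x. etav m B p (2*j-1) * rho (xi (2*j)) x))"
proof -
  have even: "rho (dmap r M (xi (2*i))) = 0" if "i \<le> m" for i
    using vs that unfolding vert_simplified_def by (blast intro: rho_UC)
  have odd: "rho (dmap r M (xi (2*j-1))) = rho (xi (2*j))" if "j \<in> {1..m}" for j
    using vs that unfolding vert_simplified_def by (blast intro: rho_diff_UC)
  have "rho (dmap r M (eta p))
      = (\<Sum>q<2*m+1. (\<lambda>x. poly.coeff (B p q) 0 * rho (dmap r M (xi q)) x))"
    by (simp only: eta_lincomb[OF p] dmap_lincomb rho_sum rho_psmul r)
  also have "\<dots> = (\<Sum>j\<in>{1..m}. (\<lambda>x. poly.coeff (B p (2*j-1)) 0 * rho (dmap r M (xi (2*j-1))) x))"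
    by (rule sum_odd_support) (simp add: even zero_fun_def)
  also have "\<dots> = (\<Sum>j\<in>{1..m}. (\<lambda>x. etav m B p (2*j-1) * rho (xi (2*j)) x))"
  proof (rule sum.cong)
    fix j assume j: "j \<in> {1..m}"
    then have "2*j-1 < r" using r by auto
    then show "(\<lambda>x. poly.coeff (B p (2*j-1)) 0 * rho (dmap r M (xi (2*j-1))) x)
        = (\<lambda>x. etav m B p (2*j-1) * rho (xi (2*j)) x)"
      by (simp only: odd[OF j] etav_coeff)
  qed simp
  finally show ?thesis .
qed

lemma lH_gap: "j \<in> {1..m} \<Longrightarrow> Alex r gr (eta (2*j-1)) + int (lH r gr eta j) = Alex r gr (eta (2*j))"
  using hs unfolding horiz_simplified_def lH_def by fastforce

lemma hV_one: "j \<in> {1..m} \<Longrightarrow> hV r gr xi j = 1 \<Longrightarrow> Alex r gr (xi (2*j-1)) = Alex r gr (xi (2*j)) + 1"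
  using vs unfolding vert_simplified_def hV_def by fastforce

lemma dmap_eta_leading:
  assumes z: "z \<in> grpiece r gr eta k"
  shows "psmul (monom 1 (snd z)) (dmap r M (eta (fst z)))
     + (if odd (fst z) then grsum eta {harrow r gr eta z} else 0) \<in> Filt r gr (k - 1)"
proof -
  obtain q s where qs: "z = (q, s)" "q < r" "Alex r gr (eta q) - int s = k"
    using z unfolding grpiece_def by auto
  show ?thesis
  proof (cases "odd q")
    case False
    then obtain i where i: "q = 2*i" "i \<le> m" using qs(2) r by (auto elim!: evenE)
    then have "dmap r M (eta q) \<in> Filt r gr (Alex r gr (eta q) - 1)"
      using hs unfolding horiz_simplified_def by blast
    then have "psmul (monom 1 s) (dmap r M (eta q)) \<in> Filt r gr (Alex r gr (eta q) - 1 - int s)"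
      by (rule Filt_monom)
    moreover have "Alex r gr (eta q) - 1 - int s = k - 1" using qs by simp
    ultimately show ?thesis using False qs by simp
  next
    case True
    define j where "j = (q + 1) div 2"
    have j: "j \<in> {1..m}" "q = 2*j - 1" "q + 1 = 2*j" using odd_index[of q m] True qs(2) r
      unfolding j_def by auto
    let ?l = "lH r gr eta j"
    have "dmap r M (eta (2*j-1)) - psmul (monom 1 ?l) (eta (2*j))
            \<in> Filt r gr (Alex r gr (eta (2*j-1)) - 1)"
      using hs j(1) unfolding horiz_simplified_def by blast
    then have "psmul (monom 1 s) (dmap r M (eta q) + psmul (monom 1 ?l) (eta (2*j)))
        \<in> Filt r gr (Alex r gr (eta q) - 1 - int s)"
      unfolding cvec_minus j(2)[symmetric] by (rule Filt_monom)
    moreover have "Alex r gr (eta q) - 1 - int s = k - 1" using qs by simp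
    moreover have "harrow r gr eta z = (2*j, s + ?l)"
      using qs j unfolding harrow_def j_def by simp
    moreover have "grsum eta {(2*j, s + ?l)} = psmul (monom 1 s) (psmul (monom 1 ?l) (eta (2*j)))"
      by (simp add: grsum_def psmul_psmul monom_mult_monom)
    ultimately show ?thesis using True qs(1) by (simp add: psmul_add)
  qed
qed

text \<open>The horizontal arrow preserves the graded piece (s + l_j compensates the grading gap).\<close>
lemma harrow_grpiece:
  assumes z: "z \<in> grpiece r gr eta k" and odd: "odd (fst z)"
  shows "harrow r gr eta z \<in> grpiece r gr eta k"
proof -
  obtain q s where qs: "z = (q, s)" "q < r" "Alex r gr (eta q) - int s = k"
    using z unfolding grpiece_def by auto
  define j where "j = (q + 1) div 2"
  have j: "j \<in> {1..m}" "q = 2*j - 1" "q + 1 = 2*j" using odd_index[of q m] odd qs r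
    unfolding j_def by auto
  then show ?thesis using lH_gap[OF j(1)] qs r j
    unfolding harrow_def grpiece_def j_def[symmetric] by auto
qed

text \<open>The leading part of a cycle involves only even eta's: modulo F_(k-1), d of its leading
  part equals the sum of the horizontal arrows of its odd generators, which must then vanish
  by independence of the graded basis.\<close>
lemma cycle_leading_part_even:
  assumes dx: "dmap r M x = 0" and T: "T \<subseteq> grpiece r gr eta k" "finite T"
    and xT: "x + grsum eta T \<in> Filt r gr (k - 1)"
  shows "\<forall>z\<in>T. even (fst z)"
proof -
  define To where "To = {z \<in> T. odd (fst z)}"
  have "dmap r M (x + grsum eta T) \<in> Filt r gr (k - 1)"
    using cx xT unfolding filtered_complex_def by blast
  then have dT: "dmap r M (grsum eta T) \<in> Filt r gr (k - 1)" by (simp add: dmap_add dx)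
  have inj: "inj_on (harrow r gr eta) To"
    by (rule inj_onI) (auto simp: harrow_def prod_eq_iff)
  have "(\<Sum>z\<in>T. if odd (fst z) then grsum eta {harrow r gr eta z} else 0)
      = (\<Sum>z\<in>To. grsum eta {harrow r gr eta z})"
    unfolding To_def by (rule sum.inter_filter[OF T(2), symmetric])
  also have "\<dots> = grsum eta (harrow r gr eta ` To)"
    unfolding grsum_def sum.reindex[OF inj] by simp
  finally have "(\<Sum>z\<in>T. psmul (monom 1 (snd z)) (dmap r M (eta (fst z)))
      + (if odd (fst z) then grsum eta {harrow r gr eta z} else 0))
      = dmap r M (grsum eta T) + grsum eta (harrow r gr eta ` To)"
    unfolding sum.distrib grsum_alt dmap_sum dmap_psmul by simp
  moreover have "(\<Sum>z\<in>T. psmul (monom 1 (snd z)) (dmap r M (eta (fst z)))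
      + (if odd (fst z) then grsum eta {harrow r gr eta z} else 0)) \<in> Filt r gr (k - 1)"
    by (rule Filt_sum, rule dmap_eta_leading) (use T(1) in blast)
  ultimately have "grsum eta (harrow r gr eta ` To) + dmap r M (grsum eta T) \<in> Filt r gr (k - 1)"
    by (simp add: add.commute)
  then have "grsum eta (harrow r gr eta ` To) \<in> Filt r gr (k - 1)"
    using dT by (rule Filt_add_cancel)
  moreover have "harrow r gr eta ` To \<subseteq> grpiece r gr eta k"
    using T(1) harrow_grpiece unfolding To_def by blast
  moreover have "finite (harrow r gr eta ` To)" unfolding To_def using T(2) by simp
  ultimately have "harrow r gr eta ` To = {}" using fb_indep[OF fb_eta] by blast
  then show ?thesis unfolding To_def by blast
qed

text \<open>Compare leading parts in F_k / F_(k-1): that of x is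
  even, that of U w has positive U-powers, while y is its own leading part.\<close>
lemma odd_sum_not_cycle_mod_U:
  assumes Y: "Y \<subseteq> grpiece r gr eta k" "finite Y" "Y \<noteq> {}" "\<forall>z\<in>Y. odd (fst z) \<and> snd z = 0"
    and x: "x \<in> Filt r gr k" "dmap r M x = 0"
    and w: "w \<in> Filt r gr (k + 1)" and xyw: "x + grsum eta Y = Uop w"
  shows False
proof -
  obtain T where T: "T \<subseteq> grpiece r gr eta k" "finite T" "x + grsum eta T \<in> Filt r gr (k - 1)"
    using fb_decomp[OF fb_eta x(1)] by auto
  have Teven: "\<forall>z\<in>T. even (fst z)" by (rule cycle_leading_part_even[OF x(2) T])
  obtain T1 where T1: "T1 \<subseteq> grpiece r gr eta k" "finite T1" "\<forall>z\<in>T1. snd z \<noteq> 0"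
      "Uop w + grsum eta T1 \<in> Filt r gr (k - 1)"
    using Uop_leading_part[OF fb_eta w] by blast
  have "Y \<inter> T = {}" using Y(4) Teven by blast
  then have YT: "grsum eta (Y \<union> T) = grsum eta Y + grsum eta T"
    using Y(2) T(2) by (rule grsum_union[rotated 2])
  have "(x + grsum eta T) + (Uop w + grsum eta T1)
      = (x + x) + ((grsum eta Y + grsum eta T) + grsum eta T1)"
    unfolding xyw[symmetric] by (simp add: ac_simps)
  then have "(x + grsum eta T) + (Uop w + grsum eta T1) = grsum eta (Y \<union> T) + grsum eta T1"
    by (simp add: YT cvec_add_self)
  then have "grsum eta (Y \<union> T) + grsum eta T1 \<in> Filt r gr (k - 1)"
    using Filt_add[OF T(3) T1(4)] by metis
  then have "Y \<union> T = T1"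
    using grsum_unique[OF fb_eta] Y(1,2) T(1,2) T1(1,2) by (metis finite_UnI le_sup_iff)
  then show False using Y(3,4) T1(3) by blast
qed

lemma Bprime_support:
  assumes aB: "a \<in> Bprime r gr m xi eta B k" and aq: "a q \<noteq> 0"
  shows "\<exists>j\<in>{1..m}. q = 2*j" and "Alex r gr (xi q) = k"
proof -
  have aBk: "a \<in> Bk r gr m xi eta B k" and aX: "a \<in> F2span {xiv (2*j) | j. 1 \<le> j \<and> j \<le> m}"
    using aB unfolding Bprime_def by auto
  show "\<exists>j\<in>{1..m}. q = 2*j"
    by (rule F2span_supp[OF aX _ aq]) (auto simp: xiv_def split: if_splits)
  show "Alex r gr (xi q) = k"
  proof (rule F2span_supp[OF aBk[unfolded Bk_def] _ aq])
    fix y q' assume y: "y \<in> {xiv p | p. p \<le> 2*m \<and> Alex r gr (xi p) = k} \<union>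
        {etav m B p | p. p \<le> 2*m \<and> Alex r gr (eta p) = k}" and yq: "y q' \<noteq> 0"
    show "Alex r gr (xi q') = k"
    proof (cases "y \<in> {xiv p | p. p \<le> 2*m \<and> Alex r gr (xi p) = k}")
      case True
      then show ?thesis using yq by (auto simp: xiv_def split: if_splits)
    next
      case False
      then obtain p where p: "y = etav m B p" "p \<le> 2*m" "Alex r gr (eta p) = k" using y by blast
      then have "q' \<le> 2*m" using yq unfolding etav_def by (auto split: if_splits)
      then show ?thesis using etav_homogeneous[of p q'] p yq r by simp
    qed
  qed
qed

lemma Bprime_odd_eta_sum:
  assumes aB: "a \<in> Bprime r gr m xi eta B k"
  obtains P where "P \<subseteq> {1..m}" "\<And>p. p \<in> P \<Longrightarrow> Alex r gr (eta (2*p-1)) = k"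
    "\<And>q. a q = (\<Sum>p\<in>P. etav m B (2*p-1) q)"
proof -
  obtain T where T: "T \<subseteq> {etav m B (2*j - 1) | j. 1 \<le> j \<and> j \<le> m}" "finite T" "a = (\<Sum>y\<in>T. y)"
    using aB unfolding Bprime_def F2span_def by blast
  have "T \<subseteq> (\<lambda>j. etav m B (2*j - 1)) ` {1..m}" using T(1) by auto
  then obtain P0 where P0: "P0 \<subseteq> {1..m}" "inj_on (\<lambda>j. etav m B (2*j - 1)) P0"
      "T = (\<lambda>j. etav m B (2*j - 1)) ` P0"
    by (auto simp: subset_image_inj)
  have finP0: "finite P0" using P0(1) finite_subset by blast
  have aP0: "a q = (\<Sum>p\<in>P0. etav m B (2*p-1) q)" for q
    using T(3) P0 by (simp add: sum.reindex sum_fun_apply)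
  define P where "P = {p \<in> P0. Alex r gr (eta (2*p-1)) = k}"
  have Pr: "2*p-1 < r" if "p \<in> P0" for p using that P0(1) r by force
  have match: "Alex r gr (xi q) = Alex r gr (eta (2*p-1)) \<and> q \<le> 2*m"
    if "p \<in> P0" "etav m B (2*p-1) q \<noteq> 0" for p q
    using that etav_homogeneous[OF Pr, of p q] r unfolding etav_def by (auto split: if_splits)
  have "a q = (\<Sum>p\<in>P. etav m B (2*p-1) q)" for q
  proof (cases "Alex r gr (xi q) = k \<and> q \<le> 2*m")
    case True
    then have "(\<Sum>p\<in>P0. etav m B (2*p-1) q) = (\<Sum>p\<in>P. etav m B (2*p-1) q)"
      using match unfolding P_def by (intro sum.mono_neutral_right[OF finP0]) auto
    then show ?thesis using aP0 by simp
  next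
    case False
    then have "a q = 0" using Bprime_support[OF aB] r by fastforce
    moreover have "etav m B (2*p-1) q = 0" if "p \<in> P" for p
    proof (rule ccontr)
      assume "etav m B (2*p-1) q \<noteq> 0"
      then show False using match[of p q] that False unfolding P_def by auto
    qed
    ultimately show ?thesis by simp
  qed
  moreover have "P \<subseteq> {1..m}" "\<And>p. p \<in> P \<Longrightarrow> Alex r gr (eta (2*p-1)) = k"
    using P0(1) unfolding P_def by auto
  ultimately show ?thesis using that by blast
qed

text \<open>Restricting a solution delta of the kappa-equations to the even eta's of grading k+1
  still solves them: a_(2j) <> 0 forces h_j = 1, i.e. A(xi_(2j-1)) = k+1, and eta_p meets
  xi_(2j-1) only if A(eta_p) = A(xi_(2j-1)).\<close>
lemma restricted_solution:
  assumes j: "j \<in> {1..m}"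
    and sol: "(\<Sum>p\<in>even_idx m. \<delta> p * etav m B p (2*j-1)) = a (2*j)"
    and h1: "a (2*j) \<noteq> 0 \<Longrightarrow> hV r gr xi j = 1"
    and ak: "a (2*j) \<noteq> 0 \<Longrightarrow> Alex r gr (xi (2*j)) = k"
  shows "(\<Sum>p\<in>{p \<in> even_idx m. \<delta> p = 1 \<and> Alex r gr (eta p) = k + 1}. etav m B p (2*j-1)) = a (2*j)"
proof -
  let ?top = "Alex r gr (xi (2*j-1)) = k + 1"
  have j1: "2*j-1 < r" using j r by auto
  have summand: "(if \<delta> p = 1 \<and> Alex r gr (eta p) = k + 1 then etav m B p (2*j-1) else 0)
      = (if ?top then \<delta> p * etav m B p (2*j-1) else 0)" if p: "p \<in> even_idx m" for p
  proof (cases "etav m B p (2*j-1) = 0")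
    case False
    moreover have "p < r" using p r unfolding even_idx_def by auto
    ultimately have "Alex r gr (eta p) = Alex r gr (xi (2*j-1))"
      using etav_homogeneous[OF _ j1] by simp
    then show ?thesis by (cases "\<delta> p") auto
  qed simp
  have top: "a (2*j) = 0" if "\<not> ?top"
    using that h1 ak hV_one[OF j] by force
  have "(\<Sum>p\<in>{p \<in> even_idx m. \<delta> p = 1 \<and> Alex r gr (eta p) = k + 1}. etav m B p (2*j-1))
      = (\<Sum>p\<in>even_idx m. if ?top then \<delta> p * etav m B p (2*j-1) else 0)"
    by (simp only: sum.inter_filter[OF finite_even_idx] summand cong: sum.cong)
  also have "\<dots> = a (2*j)" using sol top by (cases ?top) simp_all
  finally show ?thesis .
qed

text \<open>The boundary of a sum of even eta's of grading k+1 is a cycle in F_k (horizontal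
  simplification: d eta_(2i) drops the filtration).\<close>
lemma even_eta_boundary:
  assumes Q: "Q \<subseteq> even_idx m" and QA: "\<And>p. p \<in> Q \<Longrightarrow> Alex r gr (eta p) = k + 1"
  shows "dmap r M (\<Sum>p\<in>Q. eta p) \<in> Filt r gr k" and "dmap r M (dmap r M (\<Sum>p\<in>Q. eta p)) = 0"
proof -
  show "dmap r M (\<Sum>p\<in>Q. eta p) \<in> Filt r gr k" unfolding dmap_sum
  proof (rule Filt_sum)
    fix p assume p: "p \<in> Q"
    then obtain i where "p = 2*i" "i \<le> m" using Q unfolding even_idx_def by (auto elim!: evenE)
    then show "dmap r M (eta p) \<in> Filt r gr k"
      using QA[OF p] hs unfolding horiz_simplified_def by auto
  qed
  have "p < r" if "p \<in> Q" for p using that Q r unfolding even_idx_def by auto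
  then show "dmap r M (dmap r M (\<Sum>p\<in>Q. eta p)) = 0"
    using cx Cmod_sum[of Q eta r] eta_Cmod unfolding filtered_complex_def by blast
qed

lemma rho_boundary:
  assumes Q: "Q \<subseteq> even_idx m"
    and c: "\<And>j. j \<in> {1..m} \<Longrightarrow> (\<Sum>p\<in>Q. etav m B p (2*j-1)) = c (2*j)"
  shows "rho (dmap r M (\<Sum>p\<in>Q. eta p)) = (\<Sum>j\<in>{1..m}. (\<lambda>y. c (2*j) * rho (xi (2*j)) y))"
proof -
  have Qr: "p < r" if "p \<in> Q" for p using that Q r unfolding even_idx_def by auto
  have "rho (dmap r M (\<Sum>p\<in>Q. eta p))
      = (\<Sum>p\<in>Q. \<Sum>j\<in>{1..m}. (\<lambda>y. etav m B p (2*j-1) * rho (xi (2*j)) y))"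
    unfolding dmap_sum rho_sum by (rule sum.cong) (simp_all add: rho_dmap_eta Qr)
  also have "\<dots> = (\<Sum>j\<in>{1..m}. (\<lambda>y. (\<Sum>p\<in>Q. etav m B p (2*j-1)) * rho (xi (2*j)) y))"
    by (subst sum.swap) (simp only: fsum_scal)
  also have "\<dots> = (\<Sum>j\<in>{1..m}. (\<lambda>y. c (2*j) * rho (xi (2*j)) y))"
    by (rule sum.cong) (simp_all only: c)
  finally show ?thesis .
qed

lemma rho_odd_eta_sum:
  assumes P: "P \<subseteq> {1..m}" and aP: "\<And>q. a q = (\<Sum>p\<in>P. etav m B (2*p-1) q)"
    and supp: "\<And>q. a q \<noteq> 0 \<Longrightarrow> \<exists>j\<in>{1..m}. q = 2*j"
  shows "rho (\<Sum>p\<in>P. eta (2*p-1)) = (\<Sum>j\<in>{1..m}. (\<lambda>y. a (2*j) * rho (xi (2*j)) y))"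
proof -
  have Pr: "2*p-1 < r" if "p \<in> P" for p using that P r by force
  have "rho (\<Sum>p\<in>P. eta (2*p-1)) = (\<Sum>p\<in>P. \<Sum>q<r. (\<lambda>y. etav m B (2*p-1) q * rho (xi q) y))"
    unfolding rho_sum by (rule sum.cong) (simp_all only: rho_eta[OF Pr])
  also have "\<dots> = (\<Sum>q<r. (\<lambda>y. a q * rho (xi q) y))"
    by (subst sum.swap) (simp only: fsum_scal aP[symmetric])
  also have "\<dots> = (\<Sum>j\<in>{1..m}. (\<lambda>y. a (2*j) * rho (xi (2*j)) y))"
    unfolding r by (rule sum_even_support) (use supp in \<open>force simp: zero_fun_def\<close>)
  finally show ?thesis .
qed

text \<open>With Q the even eta's selected by delta in grading k+1, the cycle
  x = d(sum_Q eta_p) and the odd sum y representing a agree modulo U, contradicting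
  the key obstruction.\<close>
lemma no_kappa_solution:
  fixes a \<delta> :: "nat \<Rightarrow> bit"
  assumes aB: "a \<in> Bprime r gr m xi eta B k" and a0: "a \<noteq> 0"
    and sol: "\<And>j. j \<in> {1..m} \<Longrightarrow> (\<Sum>p\<in>even_idx m. \<delta> p * etav m B p (2*j-1)) = a (2*j)"
    and h1: "\<And>j. j \<in> {1..m} \<Longrightarrow> a (2*j) \<noteq> 0 \<Longrightarrow> hV r gr xi j = 1"
  shows False
proof -
  obtain P where P: "P \<subseteq> {1..m}" and PA: "\<And>p. p \<in> P \<Longrightarrow> Alex r gr (eta (2*p-1)) = k"
    and aP: "\<And>q. a q = (\<Sum>p\<in>P. etav m B (2*p-1) q)"
    using Bprime_odd_eta_sum[OF aB] by blast
  have Pr: "2*p-1 < r" if "p \<in> P" for p using that P r by force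
  define Q where "Q = {p \<in> even_idx m. \<delta> p = 1 \<and> Alex r gr (eta p) = k + 1}"
  define x where "x = dmap r M (\<Sum>p\<in>Q. eta p)"
  define y where "y = (\<Sum>p\<in>P. eta (2*p-1))"
  have Q: "Q \<subseteq> even_idx m" "\<And>p. p \<in> Q \<Longrightarrow> Alex r gr (eta p) = k + 1"
    unfolding Q_def by auto
  note xF = even_eta_boundary(1)[OF Q, folded x_def]
    and dx = even_eta_boundary(2)[OF Q, folded x_def]
  have yC: "y \<in> Cmod r" unfolding y_def by (rule Cmod_sum) (blast intro: eta_Cmod Pr)
  have yF: "y \<in> Filt r gr k" unfolding y_def
    by (rule Filt_sum) (metis Alex_in_Filt eta_Cmod Pr PA)
  have "rho x = (\<Sum>j\<in>{1..m}. (\<lambda>z. a (2*j) * rho (xi (2*j)) z))"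
    unfolding x_def
  proof (rule rho_boundary)
    show "Q \<subseteq> even_idx m" by (rule Q(1))
    fix j assume j: "j \<in> {1..m}"
    show "(\<Sum>p\<in>Q. etav m B p (2*j-1)) = a (2*j)" unfolding Q_def
      by (rule restricted_solution[where a=a and k=k,
            OF j sol[OF j] h1[OF j] Bprime_support(2)[OF aB, of "2*j"]])
  qed
  moreover have "rho y = (\<Sum>j\<in>{1..m}. (\<lambda>z. a (2*j) * rho (xi (2*j)) z))"
    unfolding y_def by (rule rho_odd_eta_sum[OF P aP Bprime_support(1)[OF aB]])
  ultimately have "rho (x + y) = 0" by (simp add: rho_add bitfun_add_self)
  then obtain w where wC: "w \<in> Cmod r" and xyw: "x + y = Uop w"
    using rho0_Uop[of "x + y" r] Cmod_add[OF Cmod_dmap yC] unfolding x_def by blast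
  have wF: "w \<in> Filt r gr (k + 1)"
    using Filt_Uop[OF wC] Filt_add[OF xF yF] xyw by simp
  define Y where "Y = (\<lambda>p. (2*p-1, 0::nat)) ` P"
  have injY: "inj_on (\<lambda>p. (2*p-1, 0::nat)) P" by (rule inj_onI) (use P in force)
  have "y = grsum eta Y"
    unfolding grsum_alt Y_def sum.reindex[OF injY] y_def by (simp add: comp_def psmul_one)
  moreover have "Y \<subseteq> grpiece r gr eta k" unfolding Y_def grpiece_def using Pr PA by auto
  moreover have "Y \<noteq> {}" using a0 aP unfolding Y_def by (auto simp: fun_eq_iff)
  moreover have "\<forall>z\<in>Y. odd (fst z) \<and> snd z = 0" unfolding Y_def using P by force
  moreover have "finite Y" unfolding Y_def using P finite_subset by blast
  ultimately show False using odd_sum_not_cycle_mod_U[OF _ _ _ _ xF dx wF] xyw by metis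
qed

lemma no_D123_preimage:
  assumes aB: "a \<in> Bprime r gr m xi eta B k" and a0: "a \<noteq> 0"
    and span: "(\<lambda>q. v (Xi q)) \<in> even_eta_span m B"
    and eq: "D1 m (hV r gr xi) l t L v = D123 m (hV r gr xi) l t L (iota0 a)"
  shows False
proof -
  obtain \<delta> where \<delta>: "\<And>q. v (Xi q) = (\<Sum>p\<in>even_idx m. \<delta> p * etav m B p q)"
    using span unfolding even_eta_span_def by blast
  show False
    by (rule no_kappa_solution[OF aB a0, of \<delta>])
       (use kappa_equations[OF eq] \<delta> in auto)
qed

end

text \<open>Lemma 3.5: the iota_0-parts of D2 b and D12 b lie in the even eta span, so
  no_D123_preimage applies to both.\<close>
theorem lemma3p5:
  fixes m :: nat and gr :: "nat \<Rightarrow> int" and M :: "nat \<Rightarrow> nat \<Rightarrow> bit poly"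
    and xi eta :: "nat \<Rightarrow> cvec" and A B :: "nat \<Rightarrow> nat \<Rightarrow> bit poly"
    and n k :: int and L :: bool and a :: "nat \<Rightarrow> bit"
  assumes cx: "filtered_complex (2*m+1) gr M" and red: "reduced (2*m+1) gr M"
    and vs: "vert_simplified (2*m+1) gr M m xi"
    and hs: "horiz_simplified (2*m+1) gr M m eta"
    and comp: "bases_compatible (2*m+1) gr xi eta A B"
    and nontriv: "0 < knot_genus (2*m+1) gr xi"
    and Lthin: "L \<longrightarrow> (\<forall>i. card {p. p < 2*m+1 \<and> Alex (2*m+1) gr (xi p) = i} \<le> 1)"
    and k1: "- knot_genus (2*m+1) gr xi \<le> k" and k2: "k \<le> knot_genus (2*m+1) gr xi"
    and aB: "a \<in> Bprime (2*m+1) gr m xi eta B k" and a0: "a \<noteq> 0"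
  shows "\<not> (\<exists>b\<in>Nmod m (hV (2*m+1) gr xi) (lH (2*m+1) gr eta) (n - 2 * tau (2*m+1) gr xi) L.
            D1 m (hV (2*m+1) gr xi) (lH (2*m+1) gr eta) (n - 2 * tau (2*m+1) gr xi) L
              (D2 m (hV (2*m+1) gr xi) (lH (2*m+1) gr eta) B (n - 2 * tau (2*m+1) gr xi) L b)
            = D123 m (hV (2*m+1) gr xi) (lH (2*m+1) gr eta) (n - 2 * tau (2*m+1) gr xi) L (iota0 a))
       \<and> \<not> (\<exists>b\<in>Nmod m (hV (2*m+1) gr xi) (lH (2*m+1) gr eta) (n - 2 * tau (2*m+1) gr xi) L.
            D1 m (hV (2*m+1) gr xi) (lH (2*m+1) gr eta) (n - 2 * tau (2*m+1) gr xi) L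
              (D12 m (hV (2*m+1) gr xi) (lH (2*m+1) gr eta) B (n - 2 * tau (2*m+1) gr xi) L b)
            = D123 m (hV (2*m+1) gr xi) (lH (2*m+1) gr eta) (n - 2 * tau (2*m+1) gr xi) L (iota0 a))"
proof -
  interpret simplified_bases m "2*m+1" gr M xi eta A B
    using cx vs hs comp by unfold_locales auto
  show ?thesis
    using no_D123_preimage[OF aB a0 D2_even_eta_span] no_D123_preimage[OF aB a0 D12_even_eta_span]
    by blast
qed

end
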